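(* Let $i\in\mathbb{N}$ be fixed and let $G\in\mathcal{G}_{k,n,p}$. For all $v,w\in V(G)$, \[ \mathbb{P}_w[X_i=v]=\frac{\mathcal{W}_i(w,v)}{\mathcal{W}_i(w)}\pm\mathcal{O}\!\left(\frac{\sqrt{\log n}}{p^{3/2}n^{3/2}}\right). \]
   Context: Fix an integer $k\ge2$ and let $p=p(n)$ satisfy $\frac{\log n}{n^{(k-1)/k}}\le p\le 1-\Omega(\frac{\log^4 n}{n})$. $\mathcal{G}_{k,n,p}$ denotes the set of graphs $G$ on $n$ vertices satisfying: (i) $G$ is not bipartite; (ii) $\operatorname{diam}(G)\le k$; (iii) every vertex has degree $d(v)=pn\pm\mathcal{O}(\sqrt{pn\log n})$; (iv) $2|E(G)|=pn^2\pm\mathcal{O}(\sqrt{pn^2\log n})$; (v) $|N(v)\cap N(w)|=p^2n\pm\mathcal{O}(\max\{\sqrt{p^2n\log n},\log n\})$ for all $v\ne w$; (vi) the unit eigenvector $\phi$ of the largest adjacency eigenvalue has entries $\phi_i=\frac1{\sqrt n}\pm\mathcal{O}(\frac{\log^{3/2}n}{\sqrt p\,n\log(pn)})$; (vii) $\lambda_1=(1+o(1))pn$; (viii) $\max\{|\lambda_2|,|\lambda_n|\}=\mathcal{O}(\sqrt{pn})$, where $\lambda_1\ge\dots\ge\lambda_n$ are the adjacency eigenvalues. Asymptotic notation is as $n\to\infty$ with constants independent of $n$. $X$ is a simple random walk on $G$ and $\mathbb{P}_w[\cdot]=\mathbb{P}[\cdot\mid X_0=w]$. $\mathcal{W}_i(w)$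 is the number of walks of length $i$ starting at $w$ and $\mathcal{W}_i(w,v)$ the number of walks of length $i$ from $w$ to $v$. *)

theory Defs
  imports Complex_Main "Jordan_Normal_Form.Char_Poly"
begin

text \<open>A graph on the vertex set {0..<n} is given by an adjacency relation E,
required (in the class definition) to be symmetric and irreflexive on {0..<n}.\<close>

definition is_walk :: "nat \<Rightarrow> (nat \<Rightarrow> nat \<Rightarrow> bool) \<Rightarrow> nat list \<Rightarrow> bool" where
  "is_walk n E xs \<longleftrightarrow> xs \<noteq> [] \<and> set xs \<subseteq> {..<n} \<and>
     (\<forall>j. Suc j < length xs \<longrightarrow> E (xs ! j) (xs ! Suc j))"

definition walks_from :: "nat \<Rightarrow> (nat \<Rightarrow> nat \<Rightarrow> bool) \<Rightarrow> nat \<Rightarrow> nat \<Rightarrow> nat" where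
  "walks_from n E i w = card {xs. is_walk n E xs \<and> length xs = Suc i \<and> hd xs = w}"

definition walks_between :: "nat \<Rightarrow> (nat \<Rightarrow> nat \<Rightarrow> bool) \<Rightarrow> nat \<Rightarrow> nat \<Rightarrow> nat \<Rightarrow> nat" where
  "walks_between n E i w v =
     card {xs. is_walk n E xs \<and> length xs = Suc i \<and> hd xs = w \<and> last xs = v}"

definition degree :: "nat \<Rightarrow> (nat \<Rightarrow> nat \<Rightarrow> bool) \<Rightarrow> nat \<Rightarrow> nat" where
  "degree n E v = card {u. u < n \<and> E v u}"

definition num_edges :: "nat \<Rightarrow> (nat \<Rightarrow> nat \<Rightarrow> bool) \<Rightarrow> nat" where
  "num_edges n E = card {(u, v). u < v \<and> v < n \<and> E u v}"

definition codegree :: "nat \<Rightarrow> (nat \<Rightarrow> nat \<Rightarrow> bool) \<Rightarrow> nat \<Rightarrow> nat \<Rightarrow> nat" where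
  "codegree n E v w = card {u. u < n \<and> E v u \<and> E w u}"

fun rw_prob :: "nat \<Rightarrow> (nat \<Rightarrow> nat \<Rightarrow> bool) \<Rightarrow> nat \<Rightarrow> nat \<Rightarrow> nat \<Rightarrow> real" where
  "rw_prob n E 0 w v = (if v = w then 1 else 0)"
| "rw_prob n E (Suc i) w v =
     (\<Sum>u<n. rw_prob n E i w u * (if E u v then 1 / real (degree n E u) else 0))"

definition bipartite :: "nat \<Rightarrow> (nat \<Rightarrow> nat \<Rightarrow> bool) \<Rightarrow> bool" where
  "bipartite n E \<longleftrightarrow> (\<exists>c :: nat \<Rightarrow> bool. \<forall>u<n. \<forall>v<n. E u v \<longrightarrow> c u \<noteq> c v)"

definition diam_le :: "nat \<Rightarrow> (nat \<Rightarrow> nat \<Rightarrow> bool) \<Rightarrow> nat \<Rightarrow> bool" where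
  "diam_le n E k \<longleftrightarrow> (\<forall>v<n. \<forall>w<n. \<exists>j\<le>k. walks_between n E j w v > 0)"

definition adj_mat :: "nat \<Rightarrow> (nat \<Rightarrow> nat \<Rightarrow> bool) \<Rightarrow> real mat" where
  "adj_mat n E = mat n n (\<lambda>(i, j). if E i j then 1 else 0)"

definition adj_eigs :: "nat \<Rightarrow> (nat \<Rightarrow> nat \<Rightarrow> bool) \<Rightarrow> real list" where
  "adj_eigs n E = (THE l. sorted_wrt (\<ge>) l \<and>
       char_poly (adj_mat n E) = (\<Prod>a\<leftarrow>l. [:- a, 1:]))"

text \<open>The class G_{k,n,p}. The implicit constants of the O-terms are bounded by C,
  and the o(1) in (vii) is bounded by eps n, where eps is a function tending to 0.\<close>
definition in_class :: "real \<Rightarrow> (nat \<Rightarrow> real) \<Rightarrow> nat \<Rightarrow> nat \<Rightarrow> real \<Rightarrow> (nat \<Rightarrow> nat \<Rightarrow> bool) \<Rightarrow> bool" where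
  "in_class C eps k n p E \<longleftrightarrow>
     (\<forall>u<n. \<forall>v<n. E u v = E v u) \<and> (\<forall>u<n. \<not> E u u) \<and>
     \<not> bipartite n E \<and>
     diam_le n E k \<and>
     (\<forall>v<n. \<bar>real (degree n E v) - p * n\<bar> \<le> C * sqrt (p * n * ln n)) \<and>
     \<bar>2 * real (num_edges n E) - p * n^2\<bar> \<le> C * sqrt (p * n^2 * ln n) \<and>
     (\<forall>v<n. \<forall>w<n. v \<noteq> w \<longrightarrow>
        \<bar>real (codegree n E v w) - p^2 * n\<bar> \<le> C * max (sqrt (p^2 * n * ln n)) (ln n)) \<and>
     (let l = adj_eigs n E in
        (\<exists>\<phi> :: nat \<Rightarrow> real.
           (\<Sum>j<n. (\<phi> j)^2) = 1 \<and>
           (\<forall>i<n. (\<Sum>j<n. (if E i j then 1 else 0) * \<phi> j) = hd l * \<phi> i) \<and>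
           (\<forall>i<n. \<bar>\<phi> i - 1 / sqrt n\<bar> \<le> C * ln n powr (3/2) / (sqrt p * n * ln (p * n)))) \<and>
        \<bar>hd l - p * n\<bar> \<le> eps n * (p * n) \<and>
        max \<bar>l ! 1\<bar> \<bar>last l\<bar> \<le> C * sqrt (p * n))"

end

theory Submission
  imports Defs
begin

(* If all degrees lie in [m, M], the recursions for P_w[X_i = v] and for the walk counts give
   W_i(w,v) / M^i <= P_w[X_i = v] <= W_i(w,v) / m^i and m^i <= W_i(w) <= M^i, so P_w[X_i = v] and
   W_i(w,v) / W_i(w) lie in a common interval of length W_i(w,v) (M^i - m^i) / (m^i M^i). Since
   W_i(w,v) <= W_(i-1)(w) <= M^(i-1), this is at most (M^i - m^i) / (M m^i) = O(i (M - m) / M^2).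
   In the class the degrees are pn +- C sqrt(pn log n), which gives O(sqrt(log n) / (pn)^(3/2)). *)

definition walks_between_set ::
    "nat \<Rightarrow> (nat \<Rightarrow> nat \<Rightarrow> bool) \<Rightarrow> nat \<Rightarrow> nat \<Rightarrow> nat \<Rightarrow> nat list set" where
  "walks_between_set n E i w v =
     {xs. is_walk n E xs \<and> length xs = Suc i \<and> hd xs = w \<and> last xs = v}"

lemma walks_between_eq_card: "walks_between n E i w v = card (walks_between_set n E i w v)"
  by (simp add: walks_between_def walks_between_set_def)

lemma finite_walks_between_set: "finite (walks_between_set n E i w v)"
proof (rule finite_subset)
  show "walks_between_set n E i w v \<subseteq> {xs. set xs \<subseteq> {..<n} \<and> length xs = Suc i}"
    by (auto simp: walks_between_set_def is_walk_def)
qed (rule finite_lists_length_eq, simp)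

lemma is_walk_snoc:
  assumes "ys \<noteq> []"
  shows "is_walk n E (ys @ [v]) \<longleftrightarrow> is_walk n E ys \<and> v < n \<and> E (last ys) v"
proof -
  obtain j where j: "length ys = Suc j" using assms by (cases ys) auto
  have "last ys = ys ! j" using j assms by (simp add: last_conv_nth)
  then have "(\<forall>l. Suc l < length (ys @ [v]) \<longrightarrow> E ((ys @ [v]) ! l) ((ys @ [v]) ! Suc l))
      \<longleftrightarrow> (\<forall>l. Suc l < length ys \<longrightarrow> E (ys ! l) (ys ! Suc l)) \<and> E (last ys) v"
    using j by (auto simp: nth_append less_Suc_eq all_conj_distrib imp_disjL)
  then show ?thesis using assms by (auto simp: is_walk_def)
qed

lemma is_walk_last_less: "is_walk n E xs \<Longrightarrow> last xs < n"
  unfolding is_walk_def using last_in_set by blast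

lemma walks_between_0: "walks_between n E 0 w v = (if w < n \<and> v = w then 1 else 0)"
proof -
  have "walks_between_set n E 0 w v = (if w < n \<and> v = w then {[w]} else {})"
    by (auto simp: walks_between_set_def is_walk_def length_Suc_conv)
  then show ?thesis by (simp add: walks_between_eq_card)
qed

lemma walks_between_set_Suc:
  assumes "v < n"
  shows "walks_between_set n E (Suc i) w v
       = (\<lambda>ys. ys @ [v]) ` (\<Union>u\<in>{u\<in>{..<n}. E u v}. walks_between_set n E i w u)"
proof (intro equalityI subsetI)
  fix xs assume xs: "xs \<in> walks_between_set n E (Suc i) w v"
  then have ne: "butlast xs \<noteq> []" and xs_eq: "xs = butlast xs @ [v]"
    by (auto simp: walks_between_set_def is_walk_def butlast_conv_take
        dest: append_butlast_last_id)
  have "is_walk n E (butlast xs @ [v])" "hd (butlast xs @ [v]) = w"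
    using xs by (simp_all add: walks_between_set_def flip: xs_eq)
  then have "is_walk n E (butlast xs) \<and> E (last (butlast xs)) v" "hd (butlast xs) = w"
    using is_walk_snoc[OF ne] ne by simp_all
  moreover have "last (butlast xs) < n"
    using calculation(1) is_walk_last_less by blast
  ultimately show "xs \<in> (\<lambda>ys. ys @ [v]) ` (\<Union>u\<in>{u\<in>{..<n}. E u v}. walks_between_set n E i w u)"
    using xs by (subst xs_eq) (auto simp: walks_between_set_def)
next
  fix xs assume "xs \<in> (\<lambda>ys. ys @ [v]) ` (\<Union>u\<in>{u\<in>{..<n}. E u v}. walks_between_set n E i w u)"
  then obtain ys u where ys: "ys \<in> walks_between_set n E i w u" "E u v" and xs: "xs = ys @ [v]"
    by auto
  have "ys \<noteq> []" using ys by (auto simp: walks_between_set_def is_walk_def)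
  then show "xs \<in> walks_between_set n E (Suc i) w v"
    using ys assms is_walk_snoc[of ys n E v] by (auto simp: walks_between_set_def xs)
qed

lemma walks_between_Suc:
  assumes "v < n"
  shows "walks_between n E (Suc i) w v = (\<Sum>u<n. if E u v then walks_between n E i w u else 0)"
proof -
  have "walks_between n E (Suc i) w v
      = card (\<Union>u\<in>{u\<in>{..<n}. E u v}. walks_between_set n E i w u)"
    unfolding walks_between_eq_card walks_between_set_Suc[OF assms]
    by (rule card_image) (auto simp: inj_on_def)
  also have "\<dots> = (\<Sum>u\<in>{u\<in>{..<n}. E u v}. walks_between n E i w u)"
    unfolding walks_between_eq_card
    by (rule card_UN_disjoint)
      (auto simp: finite_walks_between_set[unfolded walks_between_set_def] walks_between_set_def)
  also have "\<dots> = (\<Sum>u<n. if E u v then walks_between n E i w u else 0)"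
    by (rule sum.inter_filter) simp
  finally show ?thesis .
qed

lemma walks_from_eq_sum: "walks_from n E i w = (\<Sum>v<n. walks_between n E i w v)"
proof -
  have "{xs. is_walk n E xs \<and> length xs = Suc i \<and> hd xs = w}
      = (\<Union>v\<in>{..<n}. walks_between_set n E i w v)"
    by (auto simp: walks_between_set_def is_walk_last_less)
  then have "walks_from n E i w = card (\<Union>v\<in>{..<n}. walks_between_set n E i w v)"
    by (simp add: walks_from_def)
  also have "\<dots> = (\<Sum>v<n. walks_between n E i w v)"
    unfolding walks_between_eq_card
    by (rule card_UN_disjoint)
      (auto simp: finite_walks_between_set[unfolded walks_between_set_def] walks_between_set_def)
  finally show ?thesis .
qed

lemma walks_from_Suc:
  "walks_from n E (Suc i) w = (\<Sum>u<n. walks_between n E i w u * degree n E u)"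
proof -
  have deg: "(\<Sum>v<n. if E u v then a else 0) = a * degree n E u" for u a :: nat
    by (simp add: sum.If_cases degree_def Int_def conj_commute)
  have "walks_from n E (Suc i) w = (\<Sum>v<n. \<Sum>u<n. if E u v then walks_between n E i w u else 0)"
    by (simp add: walks_from_eq_sum walks_between_Suc)
  also have "\<dots> = (\<Sum>u<n. walks_between n E i w u * degree n E u)"
    by (subst sum.swap) (simp add: deg)
  finally show ?thesis .
qed

lemma walks_between_Suc_le_walks_from:
  assumes "v < n"
  shows "walks_between n E (Suc i) w v \<le> walks_from n E i w"
  unfolding walks_between_Suc[OF assms] walks_from_eq_sum by (rule sum_mono) simp

lemma degree_pos: "v < n \<Longrightarrow> E u v \<Longrightarrow> 0 < degree n E u"
  unfolding degree_def by (subst card_gt_0_iff) auto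

lemma rw_prob_nonneg: "0 \<le> rw_prob n E i w v"
  by (induction i arbitrary: v) (auto intro!: sum_nonneg)

lemma rw_prob_le_walks_between:
  assumes m: "0 < m" and deg: "\<And>u. u < n \<Longrightarrow> m \<le> real (degree n E u)" and "v < n"
  shows "rw_prob n E i w v \<le> real (walks_between n E i w v) / m ^ i"
  using \<open>v < n\<close>
proof (induction i arbitrary: v)
  case 0
  then show ?case by (simp add: walks_between_0)
next
  case (Suc i)
  have "rw_prob n E (Suc i) w v
      \<le> (\<Sum>u<n. real (walks_between n E i w u) / m ^ i * (if E u v then 1 / m else 0))"
    unfolding rw_prob.simps
  proof (intro sum_mono mult_mono)
    fix u assume "u \<in> {..<n}"
    then show "rw_prob n E i w u \<le> real (walks_between n E i w u) / m ^ i"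
      and "(if E u v then 1 / real (degree n E u) else 0) \<le> (if E u v then 1 / m else 0)"
      using Suc.IH deg m by (auto intro: frac_le)
  qed (use m in \<open>auto simp: rw_prob_nonneg\<close>)
  also have "\<dots> = real (walks_between n E (Suc i) w v) / m ^ Suc i"
    unfolding walks_between_Suc[OF Suc.prems] of_nat_sum sum_divide_distrib by (intro sum.cong) auto
  finally show ?case .
qed

lemma rw_prob_ge_walks_between:
  assumes deg: "\<And>u. u < n \<Longrightarrow> real (degree n E u) \<le> M" and "v < n"
  shows "real (walks_between n E i w v) / M ^ i \<le> rw_prob n E i w v"
  using \<open>v < n\<close>
proof (induction i arbitrary: v)
  case 0
  then show ?case by (simp add: walks_between_0)
next
  case (Suc i)
  have "real (walks_between n E (Suc i) w v) / M ^ Suc i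
      = (\<Sum>u<n. real (walks_between n E i w u) / M ^ i * (if E u v then 1 / M else 0))"
    unfolding walks_between_Suc[OF Suc.prems] of_nat_sum sum_divide_distrib by (intro sum.cong) auto
  also have "\<dots> \<le> rw_prob n E (Suc i) w v"
    unfolding rw_prob.simps
  proof (intro sum_mono)
    fix u assume u: "u \<in> {..<n}"
    show "real (walks_between n E i w u) / M ^ i * (if E u v then 1 / M else 0)
        \<le> rw_prob n E i w u * (if E u v then 1 / real (degree n E u) else 0)"
    proof (cases "E u v")
      case True
      then have "0 < real (degree n E u)" "real (degree n E u) \<le> M"
        using degree_pos[OF Suc.prems] deg u by auto
      then have "real (walks_between n E i w u) / M ^ i * (1 / M)
          \<le> rw_prob n E i w u * (1 / real (degree n E u))"
        using Suc.IH u by (intro mult_mono frac_le) (auto simp: rw_prob_nonneg)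
      then show ?thesis using True by simp
    qed simp
  qed
  finally show ?case .
qed

lemma walks_from_0: "walks_from n E 0 w = (if w < n then 1 else 0)"
  by (simp add: walks_from_eq_sum walks_between_0)

lemma walks_from_le:
  assumes "0 \<le> M" and deg: "\<And>u. u < n \<Longrightarrow> real (degree n E u) \<le> M"
  shows "real (walks_from n E i w) \<le> M ^ i"
proof (induction i)
  case 0
  then show ?case by (simp add: walks_from_0)
next
  case (Suc i)
  have "real (walks_from n E (Suc i) w) \<le> (\<Sum>u<n. real (walks_between n E i w u) * M)"
    unfolding walks_from_Suc of_nat_sum of_nat_mult by (intro sum_mono mult_left_mono deg) auto
  also have "\<dots> = M * real (walks_from n E i w)"
    by (simp add: walks_from_eq_sum sum_distrib_left mult.commute)
  also have "\<dots> \<le> M ^ Suc i"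
    using Suc.IH \<open>0 \<le> M\<close> by (simp add: mult_left_mono)
  finally show ?case .
qed

lemma walks_from_ge:
  assumes "0 \<le> m" and deg: "\<And>u. u < n \<Longrightarrow> m \<le> real (degree n E u)" and "w < n"
  shows "m ^ i \<le> real (walks_from n E i w)"
proof (induction i)
  case 0
  then show ?case by (simp add: walks_from_0 \<open>w < n\<close>)
next
  case (Suc i)
  have "m ^ Suc i \<le> m * real (walks_from n E i w)"
    using Suc.IH \<open>0 \<le> m\<close> by (simp add: mult_left_mono)
  also have "\<dots> = (\<Sum>u<n. real (walks_between n E i w u) * m)"
    by (simp add: walks_from_eq_sum sum_distrib_left mult.commute)
  also have "\<dots> \<le> real (walks_from n E (Suc i) w)"
    unfolding walks_from_Suc of_nat_sum of_nat_mult by (intro sum_mono mult_left_mono deg) auto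
  finally show ?case .
qed

lemma rw_prob_diff_walk_ratio_le:
  assumes "w < n" "v < n" "0 < m"
    and deg: "\<And>u. u < n \<Longrightarrow> m \<le> real (degree n E u) \<and> real (degree n E u) \<le> M"
  shows "\<bar>rw_prob n E i w v - real (walks_between n E i w v) / real (walks_from n E i w)\<bar>
    \<le> (M ^ i - m ^ i) / (M * m ^ i)"
proof -
  define W where "W = real (walks_between n E i w v)"
  define Wf where "Wf = real (walks_from n E i w)"
  have mM: "m \<le> M" and M: "0 < M" using deg[OF \<open>w < n\<close>] \<open>0 < m\<close> by auto
  have Wf: "m ^ i \<le> Wf" "Wf \<le> M ^ i"
    using walks_from_ge[of m] walks_from_le[of M] deg \<open>0 < m\<close> M \<open>w < n\<close>
    by (auto simp: Wf_def)
  moreover have "0 < Wf"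
    using Wf(1) \<open>0 < m\<close> by (meson less_le_trans zero_less_power)
  ultimately have "W / M ^ i \<le> W / Wf" "W / Wf \<le> W / m ^ i"
    using \<open>0 < m\<close> by (auto simp: W_def intro!: frac_le)
  moreover have "W / M ^ i \<le> rw_prob n E i w v" "rw_prob n E i w v \<le> W / m ^ i"
    using rw_prob_ge_walks_between[of n E M] rw_prob_le_walks_between[of m n E] deg assms
    by (auto simp: W_def)
  ultimately have "\<bar>rw_prob n E i w v - W / Wf\<bar> \<le> W / m ^ i - W / M ^ i"
    by linarith
  also have "\<dots> = W * M * (M ^ i - m ^ i) / (M * m ^ i * M ^ i)"
    using \<open>0 < m\<close> M by (simp add: field_simps)
  also have "\<dots> \<le> M ^ i * (M ^ i - m ^ i) / (M * m ^ i * M ^ i)"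
  proof (rule divide_right_mono)
    show "W * M * (M ^ i - m ^ i) \<le> M ^ i * (M ^ i - m ^ i)"
    proof (cases i)
      case (Suc j)
      have "W \<le> real (walks_from n E j w)"
        unfolding W_def Suc using walks_between_Suc_le_walks_from[OF \<open>v < n\<close>] by simp
      also have "\<dots> \<le> M ^ j" using walks_from_le[of M] deg M by auto
      finally have "W * M \<le> M ^ i" using M by (simp add: Suc mult.commute)
      moreover have "m ^ i \<le> M ^ i" using \<open>0 < m\<close> mM by (simp add: power_mono)
      ultimately show ?thesis by (simp add: mult_right_mono)
    qed simp
  qed (use \<open>0 < m\<close> M in simp)
  also have "\<dots> = (M ^ i - m ^ i) / (M * m ^ i)"
    using M by simp
  finally show ?thesis by (simp add: W_def Wf_def)
qed

lemma power_diff_le_mult: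
  fixes a b :: real
  assumes "0 \<le> b" "b \<le> a"
  shows "a ^ i - b ^ i \<le> real i * (a - b) * a ^ (i - 1)"
proof (induction i)
  case (Suc i)
  have "a ^ Suc i - b ^ Suc i = a * (a ^ i - b ^ i) + b ^ i * (a - b)"
    by (simp add: algebra_simps)
  also have "\<dots> \<le> a * (real i * (a - b) * a ^ (i - 1)) + a ^ i * (a - b)"
    using Suc.IH assms by (intro add_mono mult_left_mono mult_right_mono power_mono) auto
  also have "\<dots> = real (Suc i) * (a - b) * a ^ i"
    by (cases i) (auto simp: algebra_simps)
  finally show ?case by simp
qed simp

lemma power_diff_div_le:
  fixes m M :: real
  assumes "0 < m" "m \<le> M"
  shows "(M ^ i - m ^ i) / (M * m ^ i) \<le> real i * (M - m) * (M / m) ^ i / M ^ 2"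
proof -
  have "(M ^ i - m ^ i) / (M * m ^ i) \<le> real i * (M - m) * M ^ (i - 1) / (M * m ^ i)"
    using assms by (intro divide_right_mono power_diff_le_mult) auto
  also have "\<dots> = real i * (M - m) * (M / m) ^ i / M ^ 2"
    using assms by (cases i) (auto simp: field_simps power2_eq_square)
  finally show ?thesis .
qed

lemma rw_prob_diff_walk_ratio_le_concentrated:
  assumes "w < n" "v < n" "0 < q" "s \<le> q / 2"
    and deg: "\<And>u. u < n \<Longrightarrow> \<bar>real (degree n E u) - q\<bar> \<le> s"
  shows "\<bar>rw_prob n E i w v - real (walks_between n E i w v) / real (walks_from n E i w)\<bar>
    \<le> 2 * real i * 3 ^ i * s / q ^ 2"
proof -
  have s: "0 \<le> s" using deg[OF \<open>w < n\<close>] by linarith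
  have "\<bar>rw_prob n E i w v - real (walks_between n E i w v) / real (walks_from n E i w)\<bar>
      \<le> ((q + s) ^ i - (q - s) ^ i) / ((q + s) * (q - s) ^ i)"
  proof (rule rw_prob_diff_walk_ratio_le)
    show "q - s \<le> real (degree n E u) \<and> real (degree n E u) \<le> q + s" if "u < n" for u
      using deg[OF that] by linarith
  qed (use assms in auto)
  also have "\<dots> \<le> real i * (2 * s) * ((q + s) / (q - s)) ^ i / (q + s) ^ 2"
    using power_diff_div_le[of "q - s" "q + s" i] s assms by simp
  also have "\<dots> \<le> real i * (2 * s) * 3 ^ i / q ^ 2"
  proof (intro frac_le mult_left_mono power_mono)
    show "(q + s) / (q - s) \<le> 3" using assms s by (simp add: divide_le_eq)
  qed (use assms s in auto)
  finally show ?thesis by (simp add: mult_ac)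
qed

lemma eventually_ln_le_expected_degree:
  fixes p :: "nat \<Rightarrow> real" and k :: nat
  assumes "0 < k"
    and p: "\<forall>\<^sub>F n in sequentially. ln n / real n powr ((real k - 1) / real k) \<le> p n"
  shows "\<forall>\<^sub>F n in sequentially. 0 < p n \<and> c * ln n \<le> p n * real n"
proof -
  have "((\<lambda>n. real n powr (- (1 / real k))) \<longlongrightarrow> 0) sequentially"
    using \<open>0 < k\<close> by (intro tendsto_neg_powr filterlim_real_sequentially) simp
  then have "\<forall>\<^sub>F n in sequentially. real n powr (- (1 / real k)) < 1 / max c 1"
    by (rule order_tendstoD) simp
  moreover have "\<forall>\<^sub>F n in sequentially. 2 \<le> n"
    by (rule eventually_ge_at_top)
  ultimately show ?thesis
    using p
  proof eventually_elim
    case (elim n)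
    then have ln: "0 < ln (real n)" and n: "2 \<le> real n" by simp_all
    have "max c 1 < real n powr (1 / real k)"
      using elim n by (simp add: powr_minus field_simps)
    then have "c * ln n \<le> real n powr (1 / real k) * ln n"
      using ln by (intro mult_right_mono) auto
    also have "real n powr (1 / real k) = real n / real n powr ((real k - 1) / real k)"
    proof -
      have "1 / real k = 1 - (real k - 1) / real k"
        using \<open>0 < k\<close> by (simp add: field_simps)
      then show ?thesis
        using n by (simp add: powr_diff)
    qed
    also have "\<dots> * ln n = ln n / real n powr ((real k - 1) / real k) * real n"
      by simp
    also have "\<dots> \<le> p n * real n"
      using elim n by (intro mult_right_mono) auto
    finally have "c * ln n \<le> p n * real n" .
    moreover have "0 < ln n / real n powr ((real k - 1) / real k)"
      using ln n by simp
    ultimately show ?case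
      using elim by linarith
  qed
qed

lemma sqrt_mult_div_power2:
  fixes q x :: real
  assumes "0 < q"
  shows "sqrt (q * x) / q ^ 2 = sqrt x / q powr (3 / 2)"
proof -
  have "q powr (3 / 2) = q * sqrt q"
    using powr_add[of q 1 "1 / 2"] assms by (simp add: powr_half_sqrt)
  then show ?thesis
    using assms by (simp add: real_sqrt_mult field_simps power2_eq_square)
qed

lemma mult_sqrt_le_half:
  fixes C q x :: real
  assumes "0 < q" "0 \<le> C" "4 * C ^ 2 * x \<le> q"
  shows "C * sqrt (q * x) \<le> q / 2"
proof -
  have "q * (4 * C ^ 2 * x) \<le> q * q"
    using assms by (intro mult_left_mono) auto
  then have "sqrt (C ^ 2 * (q * x)) \<le> sqrt ((q / 2) ^ 2)"
    by (intro real_sqrt_le_mono) (simp add: power2_eq_square field_simps)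
  then show ?thesis
    using assms by (simp add: real_sqrt_mult)
qed

lemma rw_prob_diff_walk_ratio_le_in_class:
  assumes E: "in_class C eps k n p E" and "0 < C" "0 < p" "4 * C ^ 2 * ln n \<le> p * n"
    and "v < n" "w < n"
  shows "\<bar>rw_prob n E i w v - real (walks_between n E i w v) / real (walks_from n E i w)\<bar>
    \<le> 2 * real i * 3 ^ i * C * sqrt (ln n) / (p powr (3/2) * real n powr (3/2))"
proof -
  define q where "q = p * real n"
  define s where "s = C * sqrt (q * ln n)"
  have "0 < q" using assms by (simp add: q_def)
  have "\<bar>real (degree n E u) - q\<bar> \<le> s" if "u < n" for u
    using E that by (simp add: in_class_def q_def s_def)
  moreover have "s \<le> q / 2"
    using mult_sqrt_le_half assms \<open>0 < q\<close> by (simp add: s_def q_def)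
  ultimately have "\<bar>rw_prob n E i w v - real (walks_between n E i w v) / real (walks_from n E i w)\<bar>
      \<le> 2 * real i * 3 ^ i * (s / q ^ 2)"
    using rw_prob_diff_walk_ratio_le_concentrated assms \<open>0 < q\<close> by simp
  also have "s / q ^ 2 = C * (sqrt (ln n) / q powr (3/2))"
    by (simp only: s_def times_divide_eq_right[symmetric] sqrt_mult_div_power2[OF \<open>0 < q\<close>])
  also have "q powr (3/2) = p powr (3/2) * real n powr (3/2)"
    using \<open>0 < p\<close> by (simp add: q_def powr_mult)
  finally show ?thesis by simp
qed

(* Only the degree bounds (iii) of the class and the lower bound on p are used. *)
theorem proposition6p3:
  fixes k i :: nat and p :: "nat \<Rightarrow> real"
  assumes "k \<ge> 2"
    and "\<forall>\<^sub>F n in sequentially. ln n / real n powr ((real k - 1) / real k) \<le> p n"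
    and "\<exists>c>0. \<forall>\<^sub>F n in sequentially. p n \<le> 1 - c * (ln n)^4 / n"
  shows "\<forall>C>0. \<forall>eps. eps \<longlonglongrightarrow> 0 \<longrightarrow>
    (\<exists>D. \<forall>\<^sub>F n in sequentially. \<forall>E. in_class C eps k n (p n) E \<longrightarrow>
       (\<forall>v<n. \<forall>w<n.
          \<bar>rw_prob n E i w v - real (walks_between n E i w v) / real (walks_from n E i w)\<bar>
            \<le> D * sqrt (ln n) / (p n powr (3/2) * real n powr (3/2))))"
proof (intro allI impI exI)
  fix C :: real and eps :: "nat \<Rightarrow> real"
  assume "C > 0"
  have "0 < k" using assms(1) by simp
  show "\<forall>\<^sub>F n in sequentially. \<forall>E. in_class C eps k n (p n) E \<longrightarrow>
       (\<forall>v<n. \<forall>w<n.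
          \<bar>rw_prob n E i w v - real (walks_between n E i w v) / real (walks_from n E i w)\<bar>
            \<le> 2 * real i * 3 ^ i * C * sqrt (ln n) / (p n powr (3/2) * real n powr (3/2)))"
    using eventually_ln_le_expected_degree[OF \<open>0 < k\<close> assms(2), of "4 * C ^ 2"]
    by eventually_elim (use \<open>C > 0\<close> rw_prob_diff_walk_ratio_le_in_class in blast)
qed

end
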